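(* Let $\{q_x,\rho_x\}_{x=1}^N$ be an ensemble of density operators on a finite-dimensional Hilbert space with probabilities $q_x$, and let $K$ be its symmetry operator, i.e. $K$ is Hermitian and there exist $r_x\ge0$, density operators $\sigma_x$ and a POVM $\{M_x\}$ with $K=q_x\rho_x+r_x\sigma_x$ and $r_x\mathrm{tr}[M_x\sigma_x]=0$ for all $x$. Then $$P_{\mathrm{guess}}=\frac1N+R,\qquad R=\frac1N\sum_{x=1}^N\|K-q_x\rho_x\|_1 .$$
   Context: $P_{\mathrm{guess}}=\max_{\{M_x\}}\sum_x q_x\mathrm{tr}[M_x\rho_x]$, the maximum over POVMs (families of positive semidefinite operators summing to the identity). $\|A\|_1=\mathrm{tr}|A|$ is the trace norm. *)

theory Defs
  imports Complex_Main "Jordan_Normal_Form.Schur_Decomposition"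
begin

definition trace :: "complex mat \<Rightarrow> complex" where
  "trace A = (\<Sum>i<dim_row A. A $$ (i,i))"

definition hermitian :: "complex mat \<Rightarrow> bool" where
  "hermitian A \<longleftrightarrow> A = mat_adjoint A"

definition psd :: "nat \<Rightarrow> complex mat \<Rightarrow> bool" where
  "psd n A \<longleftrightarrow> A \<in> carrier_mat n n \<and> hermitian A \<and>
     (\<forall>v \<in> carrier_vec n. 0 \<le> Re (conjugate v \<bullet> (A *\<^sub>v v)))"

definition density :: "nat \<Rightarrow> complex mat \<Rightarrow> bool" where
  "density n \<rho> \<longleftrightarrow> psd n \<rho> \<and> trace \<rho> = 1"

definition povm :: "nat \<Rightarrow> nat \<Rightarrow> (nat \<Rightarrow> complex mat) \<Rightarrow> bool" where
  "povm n N M \<longleftrightarrow> (\<forall>x\<in>{1..N}. psd n (M x)) \<and>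
     (\<forall>i<n. \<forall>j<n. (\<Sum>x\<in>{1..N}. M x $$ (i,j)) = (1\<^sub>m n) $$ (i,j))"

definition abs_mat :: "complex mat \<Rightarrow> complex mat" where
  "abs_mat A = (THE B. psd (dim_col A) B \<and> B * B = mat_adjoint A * A)"

definition trace_norm :: "complex mat \<Rightarrow> real" where
  "trace_norm A = Re (trace (abs_mat A))"

definition P_guess :: "nat \<Rightarrow> nat \<Rightarrow> (nat \<Rightarrow> real) \<Rightarrow> (nat \<Rightarrow> complex mat) \<Rightarrow> real" where
  "P_guess n N q \<rho> = Sup {(\<Sum>x\<in>{1..N}. q x * Re (trace (M x * \<rho> x))) | M. povm n N M}"

end

theory Submission
  imports Defs
begin

text \<open>
  For every POVM \<open>M'\<close>, \<open>q\<^sub>x tr(M'\<^sub>x \<rho>\<^sub>x) \<le> tr(M'\<^sub>x K)\<close> because \<open>K - q\<^sub>x \<rho>\<^sub>x = r\<^sub>x \<sigma>\<^sub>x\<close>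
  and the trace of a product of positive semidefinite matrices is nonnegative; summing over \<open>x\<close>
  and using \<open>\<Sum>\<^sub>x M'\<^sub>x = 1\<close> bounds the success probability by \<open>tr K\<close>. The given POVM attains
  the bound by complementary slackness, so \<open>P\<^sub>g\<^sub>u\<^sub>e\<^sub>s\<^sub>s = tr K = q\<^sub>x + r\<^sub>x\<close> for every \<open>x\<close>.
  Averaging over \<open>x\<close> gives the formula, because \<open>r\<^sub>x \<sigma>\<^sub>x\<close> is its own absolute value (positive
  semidefinite square roots are unique) and hence has trace norm \<open>r\<^sub>x\<close>.
\<close>

lemma sum_cnj_mult_self_eq_0:
  assumes "finite I" "(\<Sum>i\<in>I. cnj (u i) * u i) = 0" "i \<in> I"
  shows "u i = 0"
proof -
  have "(\<Sum>i\<in>I. cnj (u i) * u i) = of_real (\<Sum>i\<in>I. (cmod (u i))\<^sup>2)"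
    unfolding of_real_sum
    by (intro sum.cong) (simp_all add: complex_norm_square mult.commute del: of_real_power)
  with assms show ?thesis by (simp add: sum_nonneg_eq_0_iff del: of_real_sum)
qed

lemma quadratic_nonneg_linear_coeff_zero:
  fixes a b :: real
  assumes "0 \<le> b" "\<And>t. 0 \<le> 2 * t * a + t\<^sup>2 * b"
  shows "a = 0"
proof -
  define t where "t = - a / (b + 1)"
  have a: "a = - t * (b + 1)"
    using assms(1) by (simp add: t_def)
  have "2 * t * a + t\<^sup>2 * b = - (t\<^sup>2 * (b + 2))"
    unfolding a by (simp add: power2_eq_square algebra_simps)
  with assms(2)[of t] have "t\<^sup>2 * (b + 2) \<le> 0" by linarith
  with assms(1) have "t = 0"
    by (smt (verit) mult_pos_pos power2_less_eq_zero_iff zero_less_power2)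
  then show ?thesis by (simp add: a)
qed

section \<open>Positive semidefinite index functions\<close>

text \<open>
  Square matrices are handled here as functions of two indices, of which only the values below
  \<open>n\<close> matter; this keeps the index manipulations free of carrier conditions.
\<close>

definition sesq :: "nat \<Rightarrow> (nat \<Rightarrow> nat \<Rightarrow> complex) \<Rightarrow> (nat \<Rightarrow> complex) \<Rightarrow> (nat \<Rightarrow> complex) \<Rightarrow> complex"
  where "sesq n A v w = (\<Sum>i<n. \<Sum>j<n. cnj (v i) * A i j * w j)"

definition herm_fun :: "nat \<Rightarrow> (nat \<Rightarrow> nat \<Rightarrow> complex) \<Rightarrow> bool"
  where "herm_fun n A \<longleftrightarrow> (\<forall>i<n. \<forall>j<n. A i j = cnj (A j i))"

definition psd_fun :: "nat \<Rightarrow> (nat \<Rightarrow> nat \<Rightarrow> complex) \<Rightarrow> bool"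
  where "psd_fun n A \<longleftrightarrow> herm_fun n A \<and> (\<forall>v. 0 \<le> Re (sesq n A v v))"

lemma herm_funD: "herm_fun n A \<Longrightarrow> i < n \<Longrightarrow> j < n \<Longrightarrow> cnj (A i j) = A j i"
  unfolding herm_fun_def by (metis complex_cnj_cnj)

lemma psd_funD:
  assumes "psd_fun n A"
  shows "herm_fun n A" "0 \<le> Re (sesq n A v v)"
  using assms unfolding psd_fun_def by auto

lemma psd_fun_cong:
  assumes "\<And>i j. i < n \<Longrightarrow> j < n \<Longrightarrow> A i j = B i j"
  shows "psd_fun n A \<longleftrightarrow> psd_fun n B"
proof -
  have "sesq n A = sesq n B"
    using assms by (intro ext) (simp add: sesq_def)
  moreover have "herm_fun n A \<longleftrightarrow> herm_fun n B"
    using assms by (simp add: herm_fun_def)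
  ultimately show ?thesis by (simp add: psd_fun_def)
qed

lemma psd_fun_scale:
  assumes A: "psd_fun n A" and c: "0 \<le> c"
  shows "psd_fun n (\<lambda>i j. of_real c * A i j)"
proof -
  have "sesq n (\<lambda>i j. of_real c * A i j) v v = of_real c * sesq n A v v" for v
    unfolding sesq_def by (simp add: sum_distrib_left mult_ac)
  moreover have "herm_fun n (\<lambda>i j. of_real c * A i j)"
    using herm_funD[OF psd_funD(1)[OF A]] unfolding herm_fun_def by simp
  ultimately show ?thesis
    using A c by (simp add: psd_fun_def)
qed

lemma sesq_apply: "sesq n A u v = (\<Sum>i<n. cnj (u i) * (\<Sum>j<n. A i j * v j))"
  unfolding sesq_def by (simp add: sum_distrib_left mult.assoc)

lemma sesq_add_scaled:
  "sesq n A (\<lambda>i. v i + t * u i) (\<lambda>i. v i + t * u i) =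
   sesq n A v v + cnj t * sesq n A u v + t * sesq n A v u + cnj t * t * sesq n A u u"
proof -
  have "cnj (v i + t * u i) * A i j * (v j + t * u j) =
      cnj (v i) * A i j * v j + cnj t * (cnj (u i) * A i j * v j)
      + t * (cnj (v i) * A i j * u j) + cnj t * t * (cnj (u i) * A i j * u j)" for i j
    by (simp add: algebra_simps)
  then show ?thesis
    unfolding sesq_def by (simp only: sum.distrib sum_distrib_left)
qed

lemma sesq_swap: "herm_fun n A \<Longrightarrow> sesq n A w v = cnj (sesq n A v w)"
  unfolding sesq_def cnj_sum
  by (subst sum.swap) (auto intro!: sum.cong simp: herm_funD mult_ac)

lemma sesq_unit_left:
  "m < n \<Longrightarrow> sesq n A (\<lambda>i. if i = m then 1 else 0) v = (\<Sum>j<n. A m j * v j)"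
  unfolding sesq_apply
  by (simp add: if_distrib[where f = cnj] if_distrib[where f = "\<lambda>x. x * _"] cong: if_cong)

lemma sesq_unit_right:
  "m < n \<Longrightarrow> sesq n A v (\<lambda>j. if j = m then 1 else 0) = (\<Sum>i<n. cnj (v i) * A i m)"
  unfolding sesq_apply by (simp add: if_distrib[where f = "\<lambda>x. _ * x"] cong: if_cong)

lemma sesq_unit:
  "m < n \<Longrightarrow> sesq n A (\<lambda>i. if i = m then 1 else 0) (\<lambda>j. if j = m then 1 else 0) = A m m"
  by (simp add: sesq_unit_left if_distrib[where f = "\<lambda>x. _ * x"] cong: if_cong)

text \<open>
  As the form vanishes at \<open>v\<close>, its value \<open>2 t |A v|\<^sup>2 + t\<^sup>2 (A v)\<^sup>* A (A v)\<close> at \<open>v + t (A v)\<close>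
  can stay nonnegative for all real \<open>t\<close> only if \<open>A v = 0\<close>.
\<close>

lemma psd_fun_kernel:
  assumes A: "psd_fun n A" and v: "Re (sesq n A v v) = 0" and i: "i < n"
  shows "(\<Sum>j<n. A i j * v j) = 0"
proof -
  define u where "u i = (\<Sum>j<n. A i j * v j)" for i
  define a where "a = sesq n A u v"
  have a_eq: "a = (\<Sum>i<n. cnj (u i) * u i)"
    unfolding a_def sesq_apply u_def ..
  have "Re a = 0"
  proof (rule quadratic_nonneg_linear_coeff_zero)
    show "0 \<le> Re (sesq n A u u)" using A by (rule psd_funD)
  next
    fix t :: real
    have "sesq n A v u = cnj a"
      unfolding a_def using A by (metis psd_funD(1) sesq_swap)
    then have "Re (sesq n A (\<lambda>i. v i + t * u i) (\<lambda>i. v i + t * u i)) = 2 * t * Re a + t\<^sup>2 * Re (sesq n A u u)"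
      using v by (simp add: sesq_add_scaled a_def power2_eq_square)
    then show "0 \<le> 2 * t * Re a + t\<^sup>2 * Re (sesq n A u u)"
      using A by (metis psd_funD(2))
  qed
  moreover have "cnj a = a"
    unfolding a_eq cnj_sum by (simp add: mult.commute)
  ultimately have "a = 0" by (simp add: complex_eq_iff)
  then have "u i = 0"
    using sum_cnj_mult_self_eq_0[of "{..<n}" u i] i by (simp add: a_eq)
  then show ?thesis unfolding u_def .
qed

lemma psd_fun_diag:
  assumes "psd_fun n A" "m < n"
  shows "A m m = of_real (Re (A m m))" "0 \<le> Re (A m m)"
proof -
  have "cnj (A m m) = A m m" using assms by (metis psd_funD(1) herm_funD)
  then show "A m m = of_real (Re (A m m))" by (simp add: complex_eq_iff)
  show "0 \<le> Re (A m m)"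
    using psd_funD(2)[OF assms(1), of "\<lambda>i. if i = m then 1 else 0"] assms(2)
    by (simp add: sesq_unit)
qed

lemma psd_fun_diag_eq_0:
  assumes A: "psd_fun n A" and m: "m < n" "A m m = 0" and i: "i < n"
  shows "A i m = 0" "A m i = 0"
proof -
  have "Re (sesq n A (\<lambda>j. if j = m then 1 else 0) (\<lambda>j. if j = m then 1 else 0)) = 0"
    using m by (simp add: sesq_unit)
  from psd_fun_kernel[OF A this i] show "A i m = 0"
    using m by (simp add: if_distrib[where f = "\<lambda>x. _ * x"] cong: if_cong)
  then show "A m i = 0"
    using A m i by (metis psd_funD(1) herm_funD complex_cnj_zero)
qed

lemma psd_fun_restrict:
  assumes "psd_fun (Suc n) A"
  shows "psd_fun n A"
  unfolding psd_fun_def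
proof (intro conjI allI)
  show "herm_fun n A"
    using psd_funD(1)[OF assms] unfolding herm_fun_def by (meson less_SucI)
next
  fix v :: "nat \<Rightarrow> complex"
  define w where "w i = (if i < n then v i else 0)" for i
  have "sesq (Suc n) A w w = sesq n A v v"
    by (simp add: sesq_def w_def)
  then show "0 \<le> Re (sesq n A v v)"
    using psd_funD(2)[OF assms] by metis
qed

text \<open>
  The form of the Schur complement at \<open>v\<close> is the form of \<open>A\<close> at \<open>v - (a / A m m) e\<^sub>m\<close>,
  where \<open>a = (A v)\<^sub>m\<close>. For \<open>A m m = 0\<close> the complement is \<open>A\<close> itself, as \<open>x / 0 = 0\<close>.
\<close>

lemma psd_fun_schur_complement:
  assumes A: "psd_fun n A" and m: "m < n"
  shows "psd_fun n (\<lambda>i j. A i j - A i m * A m j / A m m)"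
proof (cases "A m m = 0")
  case True
  then show ?thesis using A by simp
next
  case False
  define s where "s = A m m"
  define e where "e j = (if j = m then 1 else 0 :: complex)" for j
  have H: "herm_fun n A" using A by (rule psd_funD)
  have s_real: "cnj s = s"
    unfolding s_def using H m by (simp add: herm_funD)
  have "herm_fun n (\<lambda>i j. A i j - A i m * A m j / s)"
    unfolding herm_fun_def using m s_real by (simp add: herm_funD[OF H] mult.commute)
  moreover have "0 \<le> Re (sesq n (\<lambda>i j. A i j - A i m * A m j / s) v v)" for v
  proof -
    define a where "a = (\<Sum>j<n. A m j * v j)"
    have ev: "sesq n A e v = a"
      unfolding e_def a_def using m by (rule sesq_unit_left)
    have ve: "sesq n A v e = cnj a"
      using ev H by (metis sesq_swap)
    have col: "(\<Sum>i<n. cnj (v i) * A i m) = cnj a"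
      using ve m unfolding e_def by (simp add: sesq_unit_right)
    have "cnj (v i) * (A i j - A i m * A m j / s) * v j
        = cnj (v i) * A i j * v j - cnj (v i) * A i m * (A m j * v j) / s" for i j
      by (simp add: algebra_simps)
    then have "sesq n (\<lambda>i j. A i j - A i m * A m j / s) v v
        = sesq n A v v - (\<Sum>i<n. \<Sum>j<n. cnj (v i) * A i m * (A m j * v j) / s)"
      unfolding sesq_def by (simp only: sum_subtractf)
    also have "(\<Sum>i<n. \<Sum>j<n. cnj (v i) * A i m * (A m j * v j) / s)
        = (\<Sum>i<n. cnj (v i) * A i m) * (\<Sum>j<n. A m j * v j) / s"
      unfolding sum_divide_distrib sum_distrib_left sum_distrib_right by (rule sum.swap)
    also have "\<dots> = cnj a * a / s"
      unfolding col a_def[symmetric] ..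
    also have "sesq n A v v - cnj a * a / s
        = sesq n A (\<lambda>i. v i + (- a / s) * e i) (\<lambda>i. v i + (- a / s) * e i)"
      unfolding sesq_add_scaled ev ve
      using sesq_unit[OF m, of A] False s_real by (simp add: e_def s_def field_simps)
    finally show ?thesis
      using A by (metis psd_funD(2))
  qed
  ultimately show ?thesis
    unfolding psd_fun_def s_def by blast
qed

text \<open>
  The last index is eliminated by a Schur complement, and the eliminated column scaled by
  \<open>1 / sqrt (A n n)\<close> is the new Gram vector. If \<open>A n n = 0\<close> that column vanishes, so both
  this vector and the complement remain correct.
\<close>

lemma psd_fun_gram:
  assumes "psd_fun n A"
  shows "\<exists>c. \<forall>i<n. \<forall>j<n. A i j = (\<Sum>k<n. c k i * cnj (c k j))"
  using assms
proof (induction n arbitrary: A)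
  case 0
  then show ?case by simp
next
  case (Suc n)
  define s where "s = A n n"
  define B where "B i j = A i j - A i n * A n j / s" for i j
  have "psd_fun n B"
    unfolding B_def s_def using Suc.prems
    by (intro psd_fun_restrict[where n = n] psd_fun_schur_complement) simp_all
  then obtain c where c: "\<And>i j. i < n \<Longrightarrow> j < n \<Longrightarrow> B i j = (\<Sum>k<n. c k i * cnj (c k j))"
    using Suc.IH by blast
  have B_last: "B i n = 0 \<and> B n i = 0" if "i < Suc n" for i
  proof (cases "s = 0")
    case True
    then show ?thesis
      using psd_fun_diag_eq_0[OF Suc.prems, of n i] that by (simp add: B_def s_def)
  next
    case False
    then show ?thesis by (simp add: B_def s_def)
  qed
  define g where "g k i = (if k = n then A i n / of_real (sqrt (Re s)) else if i = n then 0 else c k i)"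
    for k i
  have g_last: "g n i * cnj (g n j) = A i n * A n j / s" if "j < Suc n" for i j
  proof -
    have "cnj (A j n) = A n j"
      using that psd_funD(1)[OF Suc.prems] by (simp add: herm_funD)
    moreover have "of_real (sqrt (Re s)) * of_real (sqrt (Re s)) = s"
      using psd_fun_diag[OF Suc.prems, of n] by (simp add: s_def flip: of_real_mult)
    ultimately show ?thesis by (simp add: g_def)
  qed
  have g_init: "(\<Sum>k<n. g k i * cnj (g k j)) = B i j" if "i < Suc n" "j < Suc n" for i j
    using that B_last c by (cases "i = n \<or> j = n") (auto simp: g_def)
  have "A i j = (\<Sum>k<Suc n. g k i * cnj (g k j))" if "i < Suc n" "j < Suc n" for i j
    using g_init[OF that] g_last[OF that(2)] by (simp add: B_def)
  then show ?case by blast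
qed

lemma psd_fun_trace_mult_nonneg:
  assumes "psd_fun n P" "psd_fun n S"
  shows "0 \<le> Re (\<Sum>i<n. \<Sum>k<n. P i k * S k i)"
proof -
  obtain c where c: "\<forall>i<n. \<forall>j<n. S i j = (\<Sum>m<n. c m i * cnj (c m j))"
    using psd_fun_gram[OF assms(2)] by blast
  have "(\<Sum>i<n. \<Sum>k<n. P i k * S k i) = (\<Sum>i<n. \<Sum>k<n. \<Sum>m<n. cnj (c m i) * P i k * c m k)"
    using c by (auto intro!: sum.cong simp: sum_distrib_left mult_ac)
  also have "\<dots> = (\<Sum>i<n. \<Sum>m<n. \<Sum>k<n. cnj (c m i) * P i k * c m k)"
    by (rule sum.cong[OF refl], rule sum.swap)
  also have "\<dots> = (\<Sum>m<n. sesq n P (c m) (c m))"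
    unfolding sesq_def by (rule sum.swap)
  finally show ?thesis
    using psd_funD(2)[OF assms(1)] by (simp add: sum_nonneg)
qed

text \<open>
  With \<open>D = B - C\<close> we have \<open>B D = - D C\<close>, so summed over the columns \<open>d\<close> of \<open>D\<close> the
  forms \<open>d\<^sup>* B d\<close> and \<open>d\<^sup>* C d\<close> are \<open>- tr (D D C)\<close> and \<open>tr (D C D)\<close>, which cancel.
\<close>

lemma psd_fun_sq_eq_columns_null:
  assumes B: "psd_fun n B" and C: "psd_fun n C"
    and sq: "\<And>i k. i < n \<Longrightarrow> k < n \<Longrightarrow> (\<Sum>j<n. B i j * B j k) = (\<Sum>j<n. C i j * C j k)"
    and k: "k < n"
  shows "Re (sesq n B (\<lambda>i. B i k - C i k) (\<lambda>i. B i k - C i k)) = 0"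
    and "Re (sesq n C (\<lambda>i. B i k - C i k) (\<lambda>i. B i k - C i k)) = 0"
proof -
  define D where "D i j = B i j - C i j" for i j
  have D_herm: "cnj (D i j) = D j i" if "i < n" "j < n" for i j
    using that psd_funD(1)[OF B] psd_funD(1)[OF C] by (simp add: D_def herm_funD)
  have BD: "(\<Sum>j<n. B i j * D j k) = - (\<Sum>j<n. D i j * C j k)" if "i < n" "k < n" for i k
    using sq[OF that] by (simp add: D_def algebra_simps sum_subtractf)
  define T where "T = (\<Sum>k<n. \<Sum>i<n. \<Sum>j<n. D k i * D i j * C j k)"
  have "(\<Sum>k<n. sesq n B (\<lambda>i. D i k) (\<lambda>i. D i k)) = - T"
    unfolding T_def sesq_apply
    by (auto intro!: sum.cong simp: BD D_herm sum_distrib_left mult.assoc simp flip: sum_negf)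
  moreover have "(\<Sum>k<n. sesq n C (\<lambda>i. D i k) (\<lambda>i. D i k)) = T"
  proof -
    have "(\<Sum>k<n. sesq n C (\<lambda>i. D i k) (\<lambda>i. D i k))
        = (\<Sum>k<n. \<Sum>i<n. \<Sum>j<n. D j k * D k i * C i j)"
      unfolding sesq_def by (auto intro!: sum.cong simp: D_herm mult_ac)
    also have "\<dots> = (\<Sum>k<n. \<Sum>j<n. \<Sum>i<n. D j k * D k i * C i j)"
      by (rule sum.cong[OF refl], rule sum.swap)
    also have "\<dots> = T"
      unfolding T_def by (rule sum.swap)
    finally show ?thesis .
  qed
  ultimately have "(\<Sum>k<n. Re (sesq n B (\<lambda>i. D i k) (\<lambda>i. D i k)))
      + (\<Sum>k<n. Re (sesq n C (\<lambda>i. D i k) (\<lambda>i. D i k))) = 0"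
    by (simp flip: Re_sum)
  moreover have "0 \<le> Re (sesq n B (\<lambda>i. D i k) (\<lambda>i. D i k))" "0 \<le> Re (sesq n C (\<lambda>i. D i k) (\<lambda>i. D i k))"
    for k using B C by (simp_all add: psd_funD)
  ultimately show "Re (sesq n B (\<lambda>i. B i k - C i k) (\<lambda>i. B i k - C i k)) = 0"
    and "Re (sesq n C (\<lambda>i. B i k - C i k) (\<lambda>i. B i k - C i k)) = 0"
    using k by (simp_all add: D_def add_nonneg_eq_0_iff sum_nonneg sum_nonneg_eq_0_iff)
qed

lemma psd_fun_sq_unique:
  assumes B: "psd_fun n B" and C: "psd_fun n C"
    and sq: "\<And>i k. i < n \<Longrightarrow> k < n \<Longrightarrow> (\<Sum>j<n. B i j * B j k) = (\<Sum>j<n. C i j * C j k)"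
    and ij: "i < n" "j < n"
  shows "B i j = C i j"
proof -
  define D where "D i j = B i j - C i j" for i j
  have "(\<Sum>l<n. B k l * D l j) = 0" "(\<Sum>l<n. C k l * D l j) = 0" if "k < n" for k
    using that ij psd_fun_kernel[OF B] psd_fun_kernel[OF C] psd_fun_sq_eq_columns_null[OF B C sq]
    unfolding D_def by blast+
  then have "(\<Sum>l<n. D j l * D l j) = 0"
    using ij by (simp add: D_def left_diff_distrib sum_subtractf)
  moreover have "D j l = cnj (D l j)" if "l < n" for l
    using that ij psd_funD(1)[OF B] psd_funD(1)[OF C] by (simp add: D_def herm_funD)
  ultimately have "(\<Sum>l<n. cnj (D l j) * D l j) = 0"
    by simp
  then have "D i j = 0"
    using sum_cnj_mult_self_eq_0[of "{..<n}" "\<lambda>l. D l j" i] ij by simp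
  then show ?thesis by (simp add: D_def)
qed

lemma trace_add: "A \<in> carrier_mat n n \<Longrightarrow> B \<in> carrier_mat n n \<Longrightarrow> trace (A + B) = trace A + trace B"
  by (simp add: trace_def sum.distrib)

lemma trace_smult: "A \<in> carrier_mat n n \<Longrightarrow> trace (a \<cdot>\<^sub>m A) = a * trace A"
  by (simp add: trace_def sum_distrib_left)

lemma trace_mult:
  "A \<in> carrier_mat n n \<Longrightarrow> B \<in> carrier_mat n n \<Longrightarrow> trace (A * B) = (\<Sum>i<n. \<Sum>k<n. A $$ (i, k) * B $$ (k, i))"
  by (simp add: trace_def scalar_prod_def atLeast0LessThan)

lemma trace_mult_linear_comb:
  assumes A: "A \<in> carrier_mat n n" and X: "X \<in> carrier_mat n n" and Y: "Y \<in> carrier_mat n n"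
  shows "trace (A * (a \<cdot>\<^sub>m X + b \<cdot>\<^sub>m Y)) = a * trace (A * X) + b * trace (A * Y)"
proof -
  have "A * (a \<cdot>\<^sub>m X + b \<cdot>\<^sub>m Y) = a \<cdot>\<^sub>m (A * X) + b \<cdot>\<^sub>m (A * Y)"
    using mult_add_distrib_mat[OF A smult_carrier_mat smult_carrier_mat, OF X Y]
    by (simp add: mult_smult_distrib[OF A X] mult_smult_distrib[OF A Y])
  moreover have "A * X \<in> carrier_mat n n" "A * Y \<in> carrier_mat n n"
    using A X Y by auto
  ultimately show ?thesis
    by (simp add: trace_add[OF smult_carrier_mat smult_carrier_mat] trace_smult)
qed

lemma psd_carrier: "psd n A \<Longrightarrow> A \<in> carrier_mat n n"
  by (simp add: psd_def)

lemma ball_carrier_vec: "(\<forall>v\<in>carrier_vec n. P v) \<longleftrightarrow> (\<forall>v. P (vec n v))"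
proof (intro iffI ballI allI)
  fix v :: "'a vec"
  assume "\<forall>v. P (vec n v)" "v \<in> carrier_vec n"
  moreover have "v = vec n (\<lambda>i. v $ i)"
    using \<open>v \<in> carrier_vec n\<close> by auto
  ultimately show "P v" by metis
qed auto

lemma psd_iff_psd_fun:
  assumes A: "A \<in> carrier_mat n n"
  shows "psd n A \<longleftrightarrow> psd_fun n (\<lambda>i j. A $$ (i, j))"
proof -
  have "hermitian A \<longleftrightarrow> herm_fun n (\<lambda>i j. A $$ (i, j))"
    using A unfolding hermitian_def herm_fun_def
    by (auto simp: mat_eq_iff mat_adjoint_def mat_of_rows_def)
  moreover have "conjugate (vec n v) \<bullet> (A *\<^sub>v vec n v) = sesq n (\<lambda>i j. A $$ (i, j)) v v" for v
    using A by (simp add: sesq_apply scalar_prod_def atLeast0LessThan)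
  ultimately show ?thesis
    using A unfolding psd_def psd_fun_def ball_carrier_vec by simp
qed

lemma trace_mult_psd_nonneg:
  assumes "psd n A" "psd n B"
  shows "0 \<le> Re (trace (A * B))"
proof -
  have "A \<in> carrier_mat n n" "B \<in> carrier_mat n n"
    using assms by (simp_all add: psd_carrier)
  with assms show ?thesis
    using psd_fun_trace_mult_nonneg[of n "\<lambda>i j. A $$ (i, j)" "\<lambda>i j. B $$ (i, j)"]
    by (simp add: psd_iff_psd_fun trace_mult)
qed

lemma psd_smult:
  assumes A: "psd n A" and c: "0 \<le> c"
  shows "psd n (of_real c \<cdot>\<^sub>m A)"
proof -
  have Ac: "A \<in> carrier_mat n n" using A by (rule psd_carrier)
  have "psd_fun n (\<lambda>i j. A $$ (i, j))" using A Ac by (simp add: psd_iff_psd_fun)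
  then have "psd_fun n (\<lambda>i j. of_real c * A $$ (i, j))"
    using c by (simp add: psd_fun_scale)
  moreover have "psd_fun n (\<lambda>i j. (of_real c \<cdot>\<^sub>m A) $$ (i, j))
      \<longleftrightarrow> psd_fun n (\<lambda>i j. of_real c * A $$ (i, j))"
    using Ac by (intro psd_fun_cong) simp
  ultimately show ?thesis
    using Ac by (simp add: psd_iff_psd_fun)
qed

lemma index_mult_mat_square:
  "A \<in> carrier_mat n n \<Longrightarrow> B \<in> carrier_mat n n \<Longrightarrow> i < n \<Longrightarrow> k < n \<Longrightarrow>
    (A * B) $$ (i, k) = (\<Sum>j<n. A $$ (i, j) * B $$ (j, k))"
  by (simp add: scalar_prod_def atLeast0LessThan)

lemma abs_mat_psd:
  assumes A: "psd n A"
  shows "abs_mat A = A"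
  unfolding abs_mat_def
proof (rule the_equality)
  have "dim_col A = n" "mat_adjoint A = A"
    using A by (auto simp: psd_def hermitian_def)
  then show "psd (dim_col A) A \<and> A * A = mat_adjoint A * A"
    using A by simp
next
  fix B assume "psd (dim_col A) B \<and> B * B = mat_adjoint A * A"
  then have B: "psd n B" and BB: "B * B = A * A"
    using A by (auto simp: psd_def hermitian_def)
  have Ac: "A \<in> carrier_mat n n" and Bc: "B \<in> carrier_mat n n"
    using A B by (simp_all add: psd_carrier)
  have PA: "psd_fun n (\<lambda>i j. A $$ (i, j))" and PB: "psd_fun n (\<lambda>i j. B $$ (i, j))"
    using A B Ac Bc psd_iff_psd_fun by blast+
  show "B = A"
  proof (rule eq_matI)
    fix i j assume "i < dim_row A" "j < dim_col A"
    then have ij: "i < n" "j < n" using Ac by auto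
    show "B $$ (i, j) = A $$ (i, j)"
    proof (rule psd_fun_sq_unique[OF PB PA _ ij])
      fix i k assume ik: "i < n" "k < n"
      have "(B * B) $$ (i, k) = (A * A) $$ (i, k)"
        using BB by simp
      then show "(\<Sum>j<n. B $$ (i, j) * B $$ (j, k)) = (\<Sum>j<n. A $$ (i, j) * A $$ (j, k))"
        by (simp add: index_mult_mat_square[OF Bc Bc ik] index_mult_mat_square[OF Ac Ac ik])
    qed
  qed (use Ac Bc in auto)
qed

lemma trace_norm_psd:
  assumes "psd n A"
  shows "trace_norm A = Re (trace A)"
  unfolding trace_norm_def abs_mat_psd[OF assms] ..

section \<open>Guessing probability\<close>

lemma povm_psd: "povm n N M \<Longrightarrow> x \<in> {1..N} \<Longrightarrow> psd n (M x)"
  by (simp add: povm_def)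

lemma povm_trace_sum:
  assumes M: "povm n N M" and K: "K \<in> carrier_mat n n"
  shows "(\<Sum>x\<in>{1..N}. trace (M x * K)) = trace K"
proof -
  have "(\<Sum>x\<in>{1..N}. trace (M x * K)) = (\<Sum>x\<in>{1..N}. \<Sum>i<n. \<Sum>k<n. M x $$ (i, k) * K $$ (k, i))"
    using trace_mult[OF psd_carrier[OF povm_psd[OF M]] K] by (rule sum.cong[OF refl])
  also have "\<dots> = (\<Sum>i<n. \<Sum>k<n. \<Sum>x\<in>{1..N}. M x $$ (i, k) * K $$ (k, i))"
    by (subst sum.swap, rule sum.cong[OF refl], rule sum.swap)
  also have "\<dots> = (\<Sum>i<n. \<Sum>k<n. (\<Sum>x\<in>{1..N}. M x $$ (i, k)) * K $$ (k, i))"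
    by (simp add: sum_distrib_right)
  also have "\<dots> = (\<Sum>i<n. \<Sum>k<n. (if i = k then K $$ (k, i) else 0))"
    using M by (intro sum.cong refl) (simp add: povm_def)
  also have "\<dots> = trace K"
    using K by (simp add: trace_def)
  finally show ?thesis .
qed

lemma P_guess_eq_trace:
  assumes K: "K \<in> carrier_mat n n"
    and decomp: "\<And>x. x \<in> {1..N} \<Longrightarrow> K = of_real (q x) \<cdot>\<^sub>m \<rho> x + of_real (r x) \<cdot>\<^sub>m \<sigma> x"
    and \<rho>: "\<And>x. x \<in> {1..N} \<Longrightarrow> \<rho> x \<in> carrier_mat n n"
    and \<sigma>: "\<And>x. x \<in> {1..N} \<Longrightarrow> psd n (\<sigma> x)"
    and r: "\<And>x. x \<in> {1..N} \<Longrightarrow> 0 \<le> r x"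
    and M: "povm n N M"
    and slack: "\<And>x. x \<in> {1..N} \<Longrightarrow> r x * Re (trace (M x * \<sigma> x)) = 0"
  shows "P_guess n N q \<rho> = Re (trace K)"
proof -
  have split: "Re (trace (A * K)) = q x * Re (trace (A * \<rho> x)) + r x * Re (trace (A * \<sigma> x))"
    if A: "A \<in> carrier_mat n n" and x: "x \<in> {1..N}" for A x
    using trace_mult_linear_comb[OF A \<rho>[OF x] psd_carrier[OF \<sigma>[OF x]]] by (simp add: decomp[OF x])
  have sum_K: "(\<Sum>x\<in>{1..N}. Re (trace (M' x * K))) = Re (trace K)" if "povm n N M'" for M'
    using povm_trace_sum[OF that K] by (simp flip: Re_sum)
  have upper: "(\<Sum>x\<in>{1..N}. q x * Re (trace (M' x * \<rho> x))) \<le> Re (trace K)"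
    if M': "povm n N M'" for M'
  proof -
    have "q x * Re (trace (M' x * \<rho> x)) \<le> Re (trace (M' x * K))" if x: "x \<in> {1..N}" for x
      using split[OF psd_carrier[OF povm_psd[OF M' x]] x] r[OF x]
        trace_mult_psd_nonneg[OF povm_psd[OF M' x] \<sigma>[OF x]]
      by simp
    then have "(\<Sum>x\<in>{1..N}. q x * Re (trace (M' x * \<rho> x))) \<le> (\<Sum>x\<in>{1..N}. Re (trace (M' x * K)))"
      by (rule sum_mono)
    then show ?thesis
      using sum_K[OF M'] by simp
  qed
  have "q x * Re (trace (M x * \<rho> x)) = Re (trace (M x * K))" if x: "x \<in> {1..N}" for x
    using split[OF psd_carrier[OF povm_psd[OF M x]] x] slack[OF x] by simp
  then have "(\<Sum>x\<in>{1..N}. q x * Re (trace (M x * \<rho> x))) = (\<Sum>x\<in>{1..N}. Re (trace (M x * K)))"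
    by (rule sum.cong[OF refl])
  then have attained: "(\<Sum>x\<in>{1..N}. q x * Re (trace (M x * \<rho> x))) = Re (trace K)"
    using sum_K[OF M] by simp
  show ?thesis
    unfolding P_guess_def
  proof (rule cSup_eq_maximum)
    show "Re (trace K) \<in> {\<Sum>x\<in>{1..N}. q x * Re (trace (M x * \<rho> x)) |M. povm n N M}"
      using M attained[symmetric] by blast
  qed (use upper in blast)
qed

lemma trace_norm_smult_density:
  assumes "density n \<sigma>" "0 \<le> r"
  shows "trace_norm (of_real r \<cdot>\<^sub>m \<sigma>) = r"
proof -
  have "psd n \<sigma>" "trace \<sigma> = 1"
    using assms(1) by (simp_all add: density_def)
  then show ?thesis
    using trace_norm_psd[OF psd_smult] trace_smult[OF psd_carrier] assms(2) by simp
qed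

theorem proposition2:
  fixes n N :: nat and q r :: "nat \<Rightarrow> real" and \<rho> \<sigma> M :: "nat \<Rightarrow> complex mat"
    and K :: "complex mat"
  assumes q_nonneg: "\<forall>x\<in>{1..N}. 0 \<le> q x"
    and q_sum: "(\<Sum>x\<in>{1..N}. q x) = 1"
    and rho: "\<forall>x\<in>{1..N}. density n (\<rho> x)"
    and K_herm: "K \<in> carrier_mat n n" "hermitian K"
    and r_nonneg: "\<forall>x\<in>{1..N}. 0 \<le> r x"
    and sigma: "\<forall>x\<in>{1..N}. density n (\<sigma> x)"
    and M: "povm n N M"
    and K_decomp: "\<forall>x\<in>{1..N}. K = complex_of_real (q x) \<cdot>\<^sub>m \<rho> x + complex_of_real (r x) \<cdot>\<^sub>m \<sigma> x"
    and compl: "\<forall>x\<in>{1..N}. complex_of_real (r x) * trace (M x * \<sigma> x) = 0"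
  shows "P_guess n N q \<rho> = 1 / real N + (1 / real N) * (\<Sum>x\<in>{1..N}. trace_norm (K - complex_of_real (q x) \<cdot>\<^sub>m \<rho> x))"
proof -
  have \<rho>x: "\<rho> x \<in> carrier_mat n n" "trace (\<rho> x) = 1"
    and \<sigma>x: "psd n (\<sigma> x)" "\<sigma> x \<in> carrier_mat n n" "trace (\<sigma> x) = 1" if "x \<in> {1..N}" for x
    using that rho sigma by (auto simp: density_def psd_def)
  have "P_guess n N q \<rho> = Re (trace K)"
  proof (rule P_guess_eq_trace[OF K_herm(1) _ \<rho>x(1) \<sigma>x(1) _ M])
    fix x assume "x \<in> {1..N}"
    then show "r x * Re (trace (M x * \<sigma> x)) = 0"
      using compl by (metis Re_complex_of_real mult_eq_0_iff of_real_eq_0_iff zero_complex.sel(1))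
  qed (use K_decomp r_nonneg in auto)
  moreover have "Re (trace K) = q x + r x" if x: "x \<in> {1..N}" for x
    using K_decomp \<rho>x[OF x] \<sigma>x[OF x] x
    by (simp add: trace_add[OF smult_carrier_mat smult_carrier_mat] trace_smult)
  then have "(\<Sum>x\<in>{1..N}. Re (trace K)) = (\<Sum>x\<in>{1..N}. q x + r x)"
    by (rule sum.cong[OF refl])
  then have "real N * Re (trace K) = 1 + (\<Sum>x\<in>{1..N}. r x)"
    using q_sum by (simp add: sum.distrib)
  moreover have "trace_norm (K - of_real (q x) \<cdot>\<^sub>m \<rho> x) = r x" if x: "x \<in> {1..N}" for x
  proof -
    have "K - of_real (q x) \<cdot>\<^sub>m \<rho> x = of_real (r x) \<cdot>\<^sub>m \<sigma> x"
      using K_decomp \<rho>x[OF x] \<sigma>x[OF x] x by (auto intro!: eq_matI)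
    then show ?thesis
      using trace_norm_smult_density sigma r_nonneg x by metis
  qed
  moreover have "N \<noteq> 0"
    using q_sum by (cases N) auto
  ultimately show ?thesis
    by (simp add: field_simps)
qed

end
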